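(* Let $\beta=\gamma^2/(2\kappa\sigma^2)$ and define, for $t>0$ and $z\ge c$, $$U(t,z)=\frac1\beta\log\Bigg(\mathrm{erf}\Big(\frac{z-c}{\sigma\sqrt{2t}}\Big)+e^{-\beta(z-c)+\beta^2\sigma^2t/2}\bigg[1-\mathrm{erf}\Big(\frac{z-c}{\sigma\sqrt{2t}}-\frac{\beta\sigma\sqrt t}{\sqrt2}\Big)\bigg]\Bigg).$$ Then $U$ satisfies $$\partial_t U(t,z)=\frac{\sigma^2}2\partial_{zz}U(t,z)+\frac{\gamma^2}{4\kappa}\big(\partial_zU(t,z)\big)^2\qquad\text{in }(0,T]\times[c,\infty),$$ with boundary condition $\partial_zU(t,c)=-1$ for all $t\in(0,T]$.
   Context: $\sigma,\gamma,\kappa,T>0$ and $c\in\mathbb R$ are constants; $\mathrm{erf}(x)=\frac{2}{\sqrt\pi}\int_0^xe^{-y^2}\,dy$ is the Gaussian error function. (This $U$ coincides with $\frac1\beta\log E[\exp(\beta\sigma L_t^{(z-c)/\sigma}(W))]$ for a standard Brownian motion $W$ with local time $L$.) *)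

theory Defs
  imports "HOL-Analysis.Analysis"
begin

definition erf :: "real \<Rightarrow> real" where
  "erf x = 2 / sqrt pi *
     (if 0 \<le> x then integral {0..x} (\<lambda>y. exp (- (y\<^sup>2)))
      else - integral {x..0} (\<lambda>y. exp (- (y\<^sup>2))))"

definition beta_par :: "real \<Rightarrow> real \<Rightarrow> real \<Rightarrow> real" where
  "beta_par \<sigma> \<gamma> \<kappa> = \<gamma>\<^sup>2 / (2 * \<kappa> * \<sigma>\<^sup>2)"

definition U :: "real \<Rightarrow> real \<Rightarrow> real \<Rightarrow> real \<Rightarrow> real \<Rightarrow> real \<Rightarrow> real" where
  "U \<sigma> \<gamma> \<kappa> c t z =
     (let \<beta> = beta_par \<sigma> \<gamma> \<kappa> in
      (1 / \<beta>) * ln (erf ((z - c) / (\<sigma> * sqrt (2 * t)))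
        + exp (- \<beta> * (z - c) + \<beta>\<^sup>2 * \<sigma>\<^sup>2 * t / 2)
          * (1 - erf ((z - c) / (\<sigma> * sqrt (2 * t)) - \<beta> * \<sigma> * sqrt t / sqrt 2))))"

end

(*
  Cole-Hopf transform. With x = (z - c) / (sigma sqrt (2 t)), the function
    u = erf x + exp (- beta (z - c) + beta^2 sigma^2 t / 2) (1 - erf (x - beta sigma sqrt (t/2)))
  solves the heat equation u_t = sigma^2/2 u_zz, so U = (1/beta) ln u satisfies
  U_t = sigma^2/2 U_zz + beta sigma^2/2 (U_z)^2, and beta sigma^2/2 = gamma^2/(4 kappa).
  Since erf 0 = 0, u obeys the Robin condition u_z = - beta u at z = c, i.e. U_z = -1 there.
  All derivative computations reduce to the single Gaussian identity
    exp (- beta (z - c) + beta^2 sigma^2 t / 2) * exp (- (x - beta sigma sqrt (t/2))^2) = exp (- x^2).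
*)

theory Submission
  imports Defs "HOL-Probability.Distributions"
begin

lemma erf_0 [simp]: "erf 0 = 0"
  unfolding erf_def by simp

lemma erf_nonneg:
  assumes "0 \<le> x"
  shows "0 \<le> erf x"
proof -
  have "0 \<le> integral {0..x} (\<lambda>y. exp (- (y\<^sup>2)))"
    by (intro integral_nonneg integrable_continuous_real continuous_intros) auto
  then show ?thesis
    using assms by (simp add: erf_def)
qed

lemma has_integral_gaussian_half_line: "((\<lambda>x. exp (- (x\<^sup>2))) has_integral sqrt pi / 2) {0..}"
proof -
  let ?f = "\<lambda>x. indicator {0..} x *\<^sub>R exp (- (x\<^sup>2)) :: real"
  have "integrable lborel ?f" "integral\<^sup>L lborel ?f = sqrt pi / 2"
    using gaussian_moment_0 by (auto simp: has_bochner_integral_iff)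
  then have "(?f has_integral sqrt pi / 2) UNIV"
    using has_integral_integral_lborel by metis
  then have "((\<lambda>x. if x \<in> {0..} then exp (- (x\<^sup>2)) else 0) has_integral sqrt pi / 2) UNIV"
    by (rule has_integral_eq[rotated]) (simp add: indicator_def)
  then show ?thesis
    by (simp only: has_integral_restrict_UNIV)
qed

lemma erf_less_1: "erf x < 1"
proof (cases "0 \<le> x")
  case True
  let ?g = "\<lambda>y. exp (- (y\<^sup>2)) :: real"
  have int: "?g integrable_on {a..b}" for a b
    by (intro integrable_continuous_real continuous_intros)
  have "0 < integral {x..x+1} (\<lambda>_. exp (- ((x+1)\<^sup>2)))"
    by simp
  also have "\<dots> \<le> integral {x..x+1} ?g"
    using True by (intro integral_le int) (auto simp: power_mono)
  finally have "integral {0..x} ?g < integral {0..x} ?g + integral {x..x+1} ?g"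
    by simp
  also have "\<dots> = integral {0..x+1} ?g"
    using True by (intro Henstock_Kurzweil_Integration.integral_combine int) auto
  also have "\<dots> \<le> integral {0..} ?g"
    using has_integral_gaussian_half_line by (intro integral_subset_le int) (auto dest: has_integral_integrable)
  also have "\<dots> = sqrt pi / 2"
    using has_integral_gaussian_half_line by (rule integral_unique)
  finally show ?thesis
    using True by (simp add: erf_def field_simps)
next
  case False
  have "0 \<le> integral {x..0} (\<lambda>y. exp (- (y\<^sup>2)))"
    by (intro integral_nonneg integrable_continuous_real continuous_intros) auto
  then have "0 \<le> 2 * integral {x..0} (\<lambda>y. exp (- (y\<^sup>2))) / sqrt pi"
    by simp
  then show ?thesis
    using False by (simp add: erf_def)
qed

lemma erf_eq_integral_from:
  assumes "-M \<le> y" "0 \<le> M"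
  shows "erf y = 2 / sqrt pi *
    (integral {-M..y} (\<lambda>x. exp (- (x\<^sup>2))) - integral {-M..0} (\<lambda>x. exp (- (x\<^sup>2))))"
proof -
  have int: "(\<lambda>x. exp (- (x\<^sup>2))) integrable_on {a..b}" for a b :: real
    by (intro integrable_continuous_real continuous_intros)
  show ?thesis
  proof (cases "0 \<le> y")
    case True
    then show ?thesis
      using Henstock_Kurzweil_Integration.integral_combine[OF _ True int, of "-M"] assms by (simp add: erf_def)
  next
    case False
    then show ?thesis
      using Henstock_Kurzweil_Integration.integral_combine[OF assms(1) _ int, of 0]
      by (simp add: erf_def field_simps)
  qed
qed

lemma has_real_derivative_erf: "(erf has_real_derivative 2 / sqrt pi * exp (- (x\<^sup>2))) (at x)"
proof -
  define M where "M = \<bar>x\<bar> + 1"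
  have "continuous_on {-M..M} (\<lambda>x. exp (- (x\<^sup>2)))"
    by (intro continuous_intros)
  moreover have "x \<in> {-M..M}" "x \<in> interior {-M..M}"
    by (auto simp: M_def)
  ultimately have "((\<lambda>y. integral {-M..y} (\<lambda>x. exp (- (x\<^sup>2)))) has_real_derivative exp (- (x\<^sup>2))) (at x)"
    using integral_has_real_derivative at_within_interior by metis
  then have "((\<lambda>y. 2 / sqrt pi *
      (integral {-M..y} (\<lambda>x. exp (- (x\<^sup>2))) - integral {-M..0} (\<lambda>x. exp (- (x\<^sup>2)))))
      has_real_derivative 2 / sqrt pi * exp (- (x\<^sup>2))) (at x)"
    by (rule DERIV_cong[OF DERIV_cmult[OF DERIV_diff[OF _ DERIV_const]]]) simp_all
  then show ?thesis
  proof (rule has_field_derivative_transform_within_open[where S = "{-M<..}"])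
    fix y
    assume "y \<in> {-M<..}"
    then show "2 / sqrt pi *
        (integral {-M..y} (\<lambda>x. exp (- (x\<^sup>2))) - integral {-M..0} (\<lambda>x. exp (- (x\<^sup>2)))) = erf y"
      by (intro erf_eq_integral_from[symmetric]) (auto simp: M_def)
  qed (auto simp: M_def)
qed

lemmas has_real_derivative_erf_chain [derivative_intros] = has_real_derivative_erf[THEN DERIV_chain2]

definition heat_arg :: "real \<Rightarrow> real \<Rightarrow> real \<Rightarrow> real \<Rightarrow> real" where
  "heat_arg \<sigma> c t z = (z - c) / (\<sigma> * sqrt (2 * t))"

definition drift_arg :: "real \<Rightarrow> real \<Rightarrow> real \<Rightarrow> real \<Rightarrow> real \<Rightarrow> real" where
  "drift_arg \<beta> \<sigma> c t z = heat_arg \<sigma> c t z - \<beta> * \<sigma> * sqrt t / sqrt 2"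

definition drift_factor :: "real \<Rightarrow> real \<Rightarrow> real \<Rightarrow> real \<Rightarrow> real \<Rightarrow> real" where
  "drift_factor \<beta> \<sigma> c t z = exp (- \<beta> * (z - c) + \<beta>\<^sup>2 * \<sigma>\<^sup>2 * t / 2)"

definition drift_tail :: "real \<Rightarrow> real \<Rightarrow> real \<Rightarrow> real \<Rightarrow> real \<Rightarrow> real" where
  "drift_tail \<beta> \<sigma> c t z = drift_factor \<beta> \<sigma> c t z * (1 - erf (drift_arg \<beta> \<sigma> c t z))"

definition heat_sol :: "real \<Rightarrow> real \<Rightarrow> real \<Rightarrow> real \<Rightarrow> real \<Rightarrow> real" where
  "heat_sol \<beta> \<sigma> c t z = erf (heat_arg \<sigma> c t z) + drift_tail \<beta> \<sigma> c t z"

definition erf_slope :: "real \<Rightarrow> real \<Rightarrow> real \<Rightarrow> real \<Rightarrow> real" where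
  "erf_slope \<sigma> c t z = 2 / sqrt pi * exp (- ((heat_arg \<sigma> c t z)\<^sup>2)) / (\<sigma> * sqrt (2 * t))"

definition heat_sol_z :: "real \<Rightarrow> real \<Rightarrow> real \<Rightarrow> real \<Rightarrow> real \<Rightarrow> real" where
  "heat_sol_z \<beta> \<sigma> c t z = - \<beta> * drift_tail \<beta> \<sigma> c t z"

definition heat_sol_zz :: "real \<Rightarrow> real \<Rightarrow> real \<Rightarrow> real \<Rightarrow> real \<Rightarrow> real" where
  "heat_sol_zz \<beta> \<sigma> c t z = \<beta>\<^sup>2 * drift_tail \<beta> \<sigma> c t z + \<beta> * erf_slope \<sigma> c t z"

lemma U_eq_ln_heat_sol:
  "U \<sigma> \<gamma> \<kappa> c t z = 1 / beta_par \<sigma> \<gamma> \<kappa> * ln (heat_sol (beta_par \<sigma> \<gamma> \<kappa>) \<sigma> c t z)"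
  by (simp add: U_def Let_def heat_sol_def drift_tail_def drift_factor_def drift_arg_def heat_arg_def)

lemma heat_sol_pos:
  assumes "0 < t" "0 < \<sigma>" "c \<le> z"
  shows "0 < heat_sol \<beta> \<sigma> c t z"
proof -
  have "0 \<le> erf (heat_arg \<sigma> c t z)"
    using assms by (intro erf_nonneg) (simp add: heat_arg_def)
  moreover have "0 < drift_tail \<beta> \<sigma> c t z"
    using erf_less_1 by (simp add: drift_tail_def drift_factor_def)
  ultimately show ?thesis
    by (simp add: heat_sol_def)
qed

lemma heat_sol_z_at_boundary: "heat_sol_z \<beta> \<sigma> c t c = - \<beta> * heat_sol \<beta> \<sigma> c t c"
  by (simp add: heat_sol_z_def heat_sol_def heat_arg_def)

lemma drift_factor_mult_exp_drift_arg:
  assumes "0 < t" "0 < \<sigma>"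
  shows "drift_factor \<beta> \<sigma> c t z * exp (- ((drift_arg \<beta> \<sigma> c t z)\<^sup>2)) = exp (- ((heat_arg \<sigma> c t z)\<^sup>2))"
proof -
  have "heat_arg \<sigma> c t z * (\<beta> * \<sigma> * sqrt t / sqrt 2) = \<beta> * (z - c) / 2"
    using assms by (simp add: heat_arg_def real_sqrt_mult field_simps)
  moreover have "(\<beta> * \<sigma> * sqrt t / sqrt 2)\<^sup>2 = \<beta>\<^sup>2 * \<sigma>\<^sup>2 * t / 2"
    using assms by (simp add: power_mult_distrib power_divide)
  ultimately show ?thesis
    by (simp add: drift_factor_def drift_arg_def power2_diff exp_add[symmetric] algebra_simps)
qed

lemma heat_arg_has_derivative_space:
  "((\<lambda>y. heat_arg \<sigma> c t y) has_real_derivative 1 / (\<sigma> * sqrt (2 * t))) (at z)"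
  unfolding heat_arg_def
  using DERIV_cdivide[OF DERIV_diff[OF DERIV_ident DERIV_const], of c "\<sigma> * sqrt (2 * t)" z]
  by simp

lemma heat_arg_has_derivative_time:
  assumes "0 < t" "0 < \<sigma>"
  shows "((\<lambda>s. heat_arg \<sigma> c s z) has_real_derivative - heat_arg \<sigma> c t z / (2 * t)) (at t)"
  unfolding heat_arg_def using assms
  by (auto intro!: derivative_eq_intros) (simp_all add: field_simps)

lemma drift_arg_has_derivative_space:
  "((\<lambda>y. drift_arg \<beta> \<sigma> c t y) has_real_derivative 1 / (\<sigma> * sqrt (2 * t))) (at z)"
  unfolding drift_arg_def
  using DERIV_diff[OF heat_arg_has_derivative_space DERIV_const] by simp

lemma drift_arg_has_derivative_time:
  assumes "0 < t" "0 < \<sigma>"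
  shows "((\<lambda>s. drift_arg \<beta> \<sigma> c s z) has_real_derivative
    - heat_arg \<sigma> c t z / (2 * t) - \<beta> * \<sigma> / (2 * sqrt (2 * t))) (at t)"
  unfolding drift_arg_def using assms
  by (auto intro!: derivative_eq_intros heat_arg_has_derivative_time) (simp add: field_simps real_sqrt_mult)

lemma drift_factor_has_derivative_space:
  "((\<lambda>y. drift_factor \<beta> \<sigma> c t y) has_real_derivative - \<beta> * drift_factor \<beta> \<sigma> c t z) (at z)"
  unfolding drift_factor_def by (auto intro!: derivative_eq_intros)

lemma drift_factor_has_derivative_time:
  "((\<lambda>s. drift_factor \<beta> \<sigma> c s z) has_real_derivative
    \<beta>\<^sup>2 * \<sigma>\<^sup>2 / 2 * drift_factor \<beta> \<sigma> c t z) (at t)"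
  unfolding drift_factor_def by (auto intro!: derivative_eq_intros)

lemma drift_tail_has_derivative_space:
  assumes "0 < t" "0 < \<sigma>"
  shows "((\<lambda>y. drift_tail \<beta> \<sigma> c t y) has_real_derivative
    - \<beta> * drift_tail \<beta> \<sigma> c t z - erf_slope \<sigma> c t z) (at z)"
proof -
  have "((\<lambda>y. drift_tail \<beta> \<sigma> c t y) has_real_derivative
    - \<beta> * drift_factor \<beta> \<sigma> c t z * (1 - erf (drift_arg \<beta> \<sigma> c t z))
    - drift_factor \<beta> \<sigma> c t z * (2 / sqrt pi * exp (- ((drift_arg \<beta> \<sigma> c t z)\<^sup>2))
      * (1 / (\<sigma> * sqrt (2 * t))))) (at z)"
    unfolding drift_tail_def
    by (rule DERIV_cong[OF DERIV_mult[OF drift_factor_has_derivative_space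
          DERIV_diff[OF DERIV_const has_real_derivative_erf_chain[OF drift_arg_has_derivative_space]]]])
       (simp add: algebra_simps)
  then show ?thesis
    using drift_factor_mult_exp_drift_arg[OF assms, of \<beta> c z]
    by (simp add: drift_tail_def erf_slope_def algebra_simps)
qed

lemma heat_sol_has_derivative_space:
  assumes "0 < t" "0 < \<sigma>"
  shows "((\<lambda>y. heat_sol \<beta> \<sigma> c t y) has_real_derivative heat_sol_z \<beta> \<sigma> c t z) (at z)"
  unfolding heat_sol_def
  by (rule DERIV_cong[OF DERIV_add[OF has_real_derivative_erf_chain[OF heat_arg_has_derivative_space]
        drift_tail_has_derivative_space[OF assms]]])
     (simp add: erf_slope_def heat_sol_z_def)

lemma heat_sol_z_has_derivative_space:
  assumes "0 < t" "0 < \<sigma>"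
  shows "((\<lambda>y. heat_sol_z \<beta> \<sigma> c t y) has_real_derivative heat_sol_zz \<beta> \<sigma> c t z) (at z)"
  unfolding heat_sol_z_def
  by (rule DERIV_cong[OF DERIV_cmult[OF drift_tail_has_derivative_space[OF assms]]])
     (simp add: heat_sol_zz_def algebra_simps power2_eq_square)

lemma heat_sol_has_derivative_time:
  assumes "0 < t" "0 < \<sigma>"
  shows "((\<lambda>s. heat_sol \<beta> \<sigma> c s z) has_real_derivative \<sigma>\<^sup>2 / 2 * heat_sol_zz \<beta> \<sigma> c t z) (at t)"
proof -
  define g where "g = 2 / sqrt pi * exp (- ((heat_arg \<sigma> c t z)\<^sup>2))"
  have factor: "drift_factor \<beta> \<sigma> c t z * (2 / sqrt pi * exp (- ((drift_arg \<beta> \<sigma> c t z)\<^sup>2)) * k)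
      = g * k" for k
    using drift_factor_mult_exp_drift_arg[OF assms, of \<beta> c z] by (simp add: g_def ac_simps)
  have "((\<lambda>s. heat_sol \<beta> \<sigma> c s z) has_real_derivative
    g * (- heat_arg \<sigma> c t z / (2 * t))
    + (\<beta>\<^sup>2 * \<sigma>\<^sup>2 / 2 * drift_factor \<beta> \<sigma> c t z * (1 - erf (drift_arg \<beta> \<sigma> c t z))
    - drift_factor \<beta> \<sigma> c t z * (2 / sqrt pi * exp (- ((drift_arg \<beta> \<sigma> c t z)\<^sup>2))
      * (- heat_arg \<sigma> c t z / (2 * t) - \<beta> * \<sigma> / (2 * sqrt (2 * t)))))) (at t)"
    unfolding heat_sol_def drift_tail_def g_def
    by (rule DERIV_add[OF has_real_derivative_erf_chain[OF heat_arg_has_derivative_time[OF assms]]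
          DERIV_cong[OF DERIV_mult[OF drift_factor_has_derivative_time
            DERIV_diff[OF DERIV_const has_real_derivative_erf_chain[OF drift_arg_has_derivative_time[OF assms]]]]]])
       (simp add: algebra_simps)
  then show ?thesis
    unfolding factor
  proof (rule DERIV_cong)
    have "erf_slope \<sigma> c t z = g / (\<sigma> * sqrt (2 * t))"
      by (simp add: erf_slope_def g_def)
    moreover have "0 < sqrt (2 * t)"
      using assms by simp
    ultimately show "g * (- heat_arg \<sigma> c t z / (2 * t))
        + (\<beta>\<^sup>2 * \<sigma>\<^sup>2 / 2 * drift_factor \<beta> \<sigma> c t z * (1 - erf (drift_arg \<beta> \<sigma> c t z))
        - g * (- heat_arg \<sigma> c t z / (2 * t) - \<beta> * \<sigma> / (2 * sqrt (2 * t))))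
      = \<sigma>\<^sup>2 / 2 * heat_sol_zz \<beta> \<sigma> c t z"
      using assms by (simp add: heat_sol_zz_def drift_tail_def field_simps power2_eq_square)
  qed
qed

lemma cole_hopf_derivatives:
  fixes u uz :: "real \<Rightarrow> real \<Rightarrow> real"
  assumes "\<beta> \<noteq> 0" "0 < u t z"
    and ut: "((\<lambda>s. u s z) has_real_derivative ut) (at t within A)"
    and uz: "((\<lambda>y. u t y) has_real_derivative uz t z) (at z within B)"
    and uzz: "((\<lambda>y. uz t y) has_real_derivative uzz) (at z within B)"
    and heat: "ut = \<sigma>\<^sup>2 / 2 * uzz"
  shows "((\<lambda>s. 1 / \<beta> * ln (u s z)) has_real_derivative ut / (\<beta> * u t z)) (at t within A)"
    and "((\<lambda>y. 1 / \<beta> * ln (u t y)) has_real_derivative uz t z / (\<beta> * u t z)) (at z within B)"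
    and "((\<lambda>y. uz t y / (\<beta> * u t y)) has_real_derivative
      (uzz * u t z - (uz t z)\<^sup>2) / (\<beta> * (u t z)\<^sup>2)) (at z within B)"
    and "ut / (\<beta> * u t z) = \<sigma>\<^sup>2 / 2 * ((uzz * u t z - (uz t z)\<^sup>2) / (\<beta> * (u t z)\<^sup>2))
      + \<beta> * \<sigma>\<^sup>2 / 2 * (uz t z / (\<beta> * u t z))\<^sup>2"
proof -
  have "u t z \<noteq> 0"
    using assms(2) by simp
  show "((\<lambda>s. 1 / \<beta> * ln (u s z)) has_real_derivative ut / (\<beta> * u t z)) (at t within A)"
    using DERIV_cmult[OF DERIV_chain2[OF DERIV_ln_divide[OF assms(2)] ut], of "1 / \<beta>"]
    by simp
  show "((\<lambda>y. 1 / \<beta> * ln (u t y)) has_real_derivative uz t z / (\<beta> * u t z)) (at z within B)"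
    using DERIV_cmult[OF DERIV_chain2[OF DERIV_ln_divide[OF assms(2)] uz], of "1 / \<beta>"]
    by simp
  show "((\<lambda>y. uz t y / (\<beta> * u t y)) has_real_derivative
      (uzz * u t z - (uz t z)\<^sup>2) / (\<beta> * (u t z)\<^sup>2)) (at z within B)"
  proof (rule DERIV_cong[OF DERIV_divide[OF uzz DERIV_cmult[OF uz, of \<beta>]]])
    show "\<beta> * u t z \<noteq> 0"
      using \<open>\<beta> \<noteq> 0\<close> \<open>u t z \<noteq> 0\<close> by simp
    show "(uzz * (\<beta> * u t z) - uz t z * (\<beta> * uz t z)) / (\<beta> * u t z * (\<beta> * u t z))
        = (uzz * u t z - (uz t z)\<^sup>2) / (\<beta> * (u t z)\<^sup>2)"
      using \<open>\<beta> \<noteq> 0\<close> \<open>u t z \<noteq> 0\<close> by (simp add: field_simps power2_eq_square)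
  qed
  show "ut / (\<beta> * u t z) = \<sigma>\<^sup>2 / 2 * ((uzz * u t z - (uz t z)\<^sup>2) / (\<beta> * (u t z)\<^sup>2))
      + \<beta> * \<sigma>\<^sup>2 / 2 * (uz t z / (\<beta> * u t z))\<^sup>2"
    using heat \<open>\<beta> \<noteq> 0\<close> \<open>u t z \<noteq> 0\<close> by (simp add: field_simps power2_eq_square)
qed

lemma cole_hopf_transform:
  fixes u uz uzz :: "real \<Rightarrow> real \<Rightarrow> real"
  assumes "\<beta> \<noteq> 0" "c \<in> J"
    and pos: "\<And>t z. t \<in> I \<Longrightarrow> z \<in> J \<Longrightarrow> 0 < u t z"
    and ut: "\<And>t z. t \<in> I \<Longrightarrow> z \<in> J \<Longrightarrow>
      ((\<lambda>s. u s z) has_real_derivative \<sigma>\<^sup>2 / 2 * uzz t z) (at t within I)"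
    and uz: "\<And>t z. t \<in> I \<Longrightarrow> z \<in> J \<Longrightarrow> ((\<lambda>y. u t y) has_real_derivative uz t z) (at z within J)"
    and uzz: "\<And>t z. t \<in> I \<Longrightarrow> z \<in> J \<Longrightarrow> ((\<lambda>y. uz t y) has_real_derivative uzz t z) (at z within J)"
    and robin: "\<And>t. t \<in> I \<Longrightarrow> uz t c = - \<beta> * u t c"
  shows "\<exists>Ut Uz Uzz :: real \<Rightarrow> real \<Rightarrow> real.
    (\<forall>t\<in>I. \<forall>z\<in>J.
       ((\<lambda>s. 1 / \<beta> * ln (u s z)) has_real_derivative Ut t z) (at t within I) \<and>
       ((\<lambda>y. 1 / \<beta> * ln (u t y)) has_real_derivative Uz t z) (at z within J) \<and>
       ((\<lambda>y. Uz t y) has_real_derivative Uzz t z) (at z within J) \<and>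
       Ut t z = \<sigma>\<^sup>2 / 2 * Uzz t z + \<beta> * \<sigma>\<^sup>2 / 2 * (Uz t z)\<^sup>2) \<and>
    (\<forall>t\<in>I. Uz t c = -1)"
proof (rule exI[of _ "\<lambda>t z. \<sigma>\<^sup>2 / 2 * uzz t z / (\<beta> * u t z)"],
    rule exI[of _ "\<lambda>t z. uz t z / (\<beta> * u t z)"],
    rule exI[of _ "\<lambda>t z. (uzz t z * u t z - (uz t z)\<^sup>2) / (\<beta> * (u t z)\<^sup>2)"],
    intro conjI ballI)
  fix t z
  assume "t \<in> I" "z \<in> J"
  note derivs = cole_hopf_derivatives[where u = u and uz = uz and t = t and z = z,
      OF \<open>\<beta> \<noteq> 0\<close> pos[OF \<open>t \<in> I\<close> \<open>z \<in> J\<close>] ut[OF \<open>t \<in> I\<close> \<open>z \<in> J\<close>]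
      uz[OF \<open>t \<in> I\<close> \<open>z \<in> J\<close>] uzz[OF \<open>t \<in> I\<close> \<open>z \<in> J\<close>] refl]
  show "((\<lambda>s. 1 / \<beta> * ln (u s z)) has_real_derivative \<sigma>\<^sup>2 / 2 * uzz t z / (\<beta> * u t z)) (at t within I)"
    by (rule derivs(1))
  show "((\<lambda>y. 1 / \<beta> * ln (u t y)) has_real_derivative uz t z / (\<beta> * u t z)) (at z within J)"
    by (rule derivs(2))
  show "((\<lambda>y. uz t y / (\<beta> * u t y)) has_real_derivative
      (uzz t z * u t z - (uz t z)\<^sup>2) / (\<beta> * (u t z)\<^sup>2)) (at z within J)"
    by (rule derivs(3))
  show "\<sigma>\<^sup>2 / 2 * uzz t z / (\<beta> * u t z) =
      \<sigma>\<^sup>2 / 2 * ((uzz t z * u t z - (uz t z)\<^sup>2) / (\<beta> * (u t z)\<^sup>2))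
      + \<beta> * \<sigma>\<^sup>2 / 2 * (uz t z / (\<beta> * u t z))\<^sup>2"
    by (rule derivs(4))
next
  fix t
  assume "t \<in> I"
  then have "0 < u t c"
    using pos \<open>c \<in> J\<close> by blast
  then show "uz t c / (\<beta> * u t c) = -1"
    using \<open>\<beta> \<noteq> 0\<close> robin[OF \<open>t \<in> I\<close>] by simp
qed

theorem proposition3p2:
  fixes \<sigma> \<gamma> \<kappa> T c :: real
  assumes "\<sigma> > 0" "\<gamma> > 0" "\<kappa> > 0" "T > 0"
  shows "\<exists>Ut Uz Uzz :: real \<Rightarrow> real \<Rightarrow> real.
    (\<forall>t\<in>{0<..T}. \<forall>z\<in>{c..}.
       ((\<lambda>s. U \<sigma> \<gamma> \<kappa> c s z) has_real_derivative Ut t z) (at t within {0<..T}) \<and>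
       ((\<lambda>y. U \<sigma> \<gamma> \<kappa> c t y) has_real_derivative Uz t z) (at z within {c..}) \<and>
       ((\<lambda>y. Uz t y) has_real_derivative Uzz t z) (at z within {c..}) \<and>
       Ut t z = \<sigma>\<^sup>2 / 2 * Uzz t z + \<gamma>\<^sup>2 / (4 * \<kappa>) * (Uz t z)\<^sup>2) \<and>
    (\<forall>t\<in>{0<..T}. Uz t c = -1)"
proof -
  have "0 < beta_par \<sigma> \<gamma> \<kappa>"
    using assms by (simp add: beta_par_def)
  have coeff: "\<gamma>\<^sup>2 / (4 * \<kappa>) = beta_par \<sigma> \<gamma> \<kappa> * \<sigma>\<^sup>2 / 2"
    using assms by (simp add: beta_par_def field_simps)
  show ?thesis
    unfolding U_eq_ln_heat_sol coeff
  proof (rule cole_hopf_transform[where u = "heat_sol _ \<sigma> c" and uz = "heat_sol_z _ \<sigma> c"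
        and uzz = "heat_sol_zz _ \<sigma> c"])
    show "beta_par \<sigma> \<gamma> \<kappa> \<noteq> 0"
      using \<open>0 < beta_par \<sigma> \<gamma> \<kappa>\<close> by simp
    show "c \<in> {c..}"
      by simp
    show "0 < heat_sol (beta_par \<sigma> \<gamma> \<kappa>) \<sigma> c t z" if "t \<in> {0<..T}" "z \<in> {c..}" for t z
      using that assms(1) by (auto intro: heat_sol_pos)
    show "((\<lambda>s. heat_sol (beta_par \<sigma> \<gamma> \<kappa>) \<sigma> c s z) has_real_derivative
        \<sigma>\<^sup>2 / 2 * heat_sol_zz (beta_par \<sigma> \<gamma> \<kappa>) \<sigma> c t z) (at t within {0<..T})"
      if "t \<in> {0<..T}" for t z
      using that assms(1) by (intro has_field_derivative_at_within[OF heat_sol_has_derivative_time]) auto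
    show "((\<lambda>y. heat_sol (beta_par \<sigma> \<gamma> \<kappa>) \<sigma> c t y) has_real_derivative
        heat_sol_z (beta_par \<sigma> \<gamma> \<kappa>) \<sigma> c t z) (at z within {c..})"
      if "t \<in> {0<..T}" for t z
      using that assms(1) by (intro has_field_derivative_at_within[OF heat_sol_has_derivative_space]) auto
    show "((\<lambda>y. heat_sol_z (beta_par \<sigma> \<gamma> \<kappa>) \<sigma> c t y) has_real_derivative
        heat_sol_zz (beta_par \<sigma> \<gamma> \<kappa>) \<sigma> c t z) (at z within {c..})"
      if "t \<in> {0<..T}" for t z
      using that assms(1) by (intro has_field_derivative_at_within[OF heat_sol_z_has_derivative_space]) auto
  qed (rule heat_sol_z_at_boundary)
qed

end
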